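(* Let $\epsilon_0>0$, $\Omega_1,\Omega_2>0$, and $\lambda_k=d_k^\alpha$ with $0<d_1<d_2$, $\alpha>0$. For $\rho_1,\rho_2>0$ let $B=\frac{\epsilon_0}{\rho_2}$, $C=\frac{\epsilon_0}{\rho_1}$, $k=\frac{\epsilon_0\rho_2}{\rho_1}$. Then the problem $$\min_{\rho_1,\rho_2}\ 1-\frac{\lambda_2}{\lambda_2+k\lambda_1}e^{-\lambda_1C-(\lambda_2+k\lambda_1)B}\quad\text{s.t. } 0<\rho_1\le\Omega_1,\ 0<\rho_2\le\Omega_2$$ has optimal solution $$\rho_1=\Omega_1,\qquad \rho_2=\min\left(\Omega_2,\ \frac{\epsilon_0\lambda_1\lambda_2+\lambda_2\sqrt{4\Omega_1\lambda_1+\epsilon_0^2\lambda_1^2}}{2\lambda_1}\right).$$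
   Context: Interpretation: uplink two-user NOMA with target SNR $\epsilon_0$, where $\rho_1,\rho_2$ are the transmit SNRs of the nearer and farther user, constrained by maximum transmit SNRs $\Omega_1,\Omega_2$; the objective is the common outage probability when users are ordered correctly. *)

theory Defs
  imports Complex_Main
begin

definition outage :: "real \<Rightarrow> real \<Rightarrow> real \<Rightarrow> real \<Rightarrow> real \<Rightarrow> real" where
  "outage eps0 lam1 lam2 rho1 rho2 =
     (let B = eps0 / rho2; C = eps0 / rho1; k = eps0 * rho2 / rho1 in
      1 - lam2 / (lam2 + k * lam1) * exp (- lam1 * C - (lam2 + k * lam1) * B))"

definition feasible :: "real \<Rightarrow> real \<Rightarrow> (real \<times> real) set" where
  "feasible Om1 Om2 = {(r1, r2). 0 < r1 \<and> r1 \<le> Om1 \<and> 0 < r2 \<and> r2 \<le> Om2}"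

end

theory Submission
  imports Defs
begin

text \<open>The success probability \<open>1 - outage\<close> is
  \<open>\<lambda>\<^sub>2\<rho>\<^sub>1 / (\<lambda>\<^sub>2\<rho>\<^sub>1 + \<epsilon>\<^sub>0\<lambda>\<^sub>1\<rho>\<^sub>2) \<cdot> exp (- \<epsilon>\<^sub>0\<lambda>\<^sub>1(1 + \<epsilon>\<^sub>0)/\<rho>\<^sub>1 - \<epsilon>\<^sub>0\<lambda>\<^sub>2/\<rho>\<^sub>2)\<close>,
  and both factors grow with \<open>\<rho>\<^sub>1\<close>, so \<open>\<rho>\<^sub>1 = \<Omega>\<^sub>1\<close> is optimal. For fixed \<open>\<rho>\<^sub>1\<close> the
  derivative of its logarithm in \<open>\<rho>\<^sub>2 = t\<close> has the sign of
  \<open>-(\<lambda>\<^sub>1t\<^sup>2 - \<epsilon>\<^sub>0\<lambda>\<^sub>1\<lambda>\<^sub>2t - \<lambda>\<^sub>2\<^sup>2\<rho>\<^sub>1)\<close>, a quadratic with one negative and one positive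
  root. Hence the success probability increases up to the positive root and decreases
  after it, so on \<open>(0, \<Omega>\<^sub>2]\<close> it is maximal at the minimum of \<open>\<Omega>\<^sub>2\<close> and that root.\<close>

lemma quadratic_eq_factored_by_roots:
  fixes a b c s r r' t :: real
  assumes "a \<noteq> 0" "s\<^sup>2 = b\<^sup>2 - 4 * a * c"
    and "r = (- b + s) / (2 * a)" "r' = (- b - s) / (2 * a)"
  shows "a * t\<^sup>2 + b * t + c = a * (t - r) * (t - r')"
proof -
  have sum: "a * (r + r') = - b"
    unfolding assms(3,4) using assms(1) by (simp add: field_simps)
  have "a * (r * r') = (b\<^sup>2 - s\<^sup>2) / (4 * a)"
    unfolding assms(3,4) using assms(1) by (simp add: field_simps power2_eq_square)
  also have "\<dots> = c"
    unfolding assms(2) using assms(1) by simp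
  finally have prod: "a * (r * r') = c" .
  have "a * (t - r) * (t - r') = a * t\<^sup>2 - a * (r + r') * t + a * (r * r')"
    by (simp add: algebra_simps power2_eq_square)
  then show ?thesis
    unfolding sum prod by simp
qed

lemma quadratic_sign_iff_le_root:
  fixes a b c t :: real
  assumes "a > 0" "c < 0" "t \<ge> 0"
  defines "r \<equiv> (- b + sqrt (b\<^sup>2 - 4 * a * c)) / (2 * a)"
  shows "a * t\<^sup>2 + b * t + c \<le> 0 \<longleftrightarrow> t \<le> r"
    and "a * t\<^sup>2 + b * t + c \<ge> 0 \<longleftrightarrow> r \<le> t"
proof -
  define s where "s = sqrt (b\<^sup>2 - 4 * a * c)"
  define r' where "r' = (- b - s) / (2 * a)"
  have "a * c < 0"
    using assms by (simp add: mult_pos_neg)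
  then have "b\<^sup>2 < b\<^sup>2 - 4 * a * c"
    by linarith
  then have s_sq: "s\<^sup>2 = b\<^sup>2 - 4 * a * c"
    unfolding s_def by (intro real_sqrt_pow2) (use zero_le_power2[of b] in linarith)
  have "\<bar>b\<bar> < s"
    unfolding s_def using \<open>b\<^sup>2 < b\<^sup>2 - 4 * a * c\<close> by (intro real_less_rsqrt) simp
  then have "r' < 0"
    unfolding r'_def using assms by (simp add: divide_neg_pos)
  have factored: "a * t\<^sup>2 + b * t + c = a * (t - r) * (t - r')"
    using assms(1) s_sq by (intro quadratic_eq_factored_by_roots) (simp_all add: r_def s_def r'_def)
  have pos: "a * (t - r') > 0"
    using assms \<open>r' < 0\<close> by simp
  have "a * t\<^sup>2 + b * t + c = (a * (t - r')) * (t - r)"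
    unfolding factored by (simp add: ac_simps)
  then show "a * t\<^sup>2 + b * t + c \<le> 0 \<longleftrightarrow> t \<le> r"
    and "a * t\<^sup>2 + b * t + c \<ge> 0 \<longleftrightarrow> r \<le> t"
    using mult_le_cancel_left_pos[OF pos, of "t - r" 0] mult_le_cancel_left_pos[OF pos, of 0 "t - r"]
    by simp_all
qed

lemma DERIV_unimodal_le_at_clipped_peak:
  fixes f f' :: "real \<Rightarrow> real" and a b c t :: real
  assumes deriv: "\<And>x. a < x \<Longrightarrow> (f has_real_derivative f' x) (at x)"
    and increasing: "\<And>x. a < x \<Longrightarrow> x \<le> c \<Longrightarrow> 0 \<le> f' x"
    and decreasing: "\<And>x. c \<le> x \<Longrightarrow> f' x \<le> 0"
    and "a < c" "a < t" "t \<le> b"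
  shows "f t \<le> f (min b c)"
proof (cases "t \<le> c")
  case True
  show ?thesis
  proof (rule DERIV_nonneg_imp_nondecreasing[of t "min b c" f])
    show "t \<le> min b c"
      using True \<open>t \<le> b\<close> by simp
    fix x
    assume "t \<le> x" "x \<le> min b c"
    then have "a < x" "x \<le> c"
      using \<open>a < t\<close> by simp_all
    then show "\<exists>y. (f has_real_derivative y) (at x) \<and> 0 \<le> y"
      using deriv increasing by blast
  qed
next
  case False
  have "f t \<le> f c"
  proof (rule DERIV_nonpos_imp_nonincreasing[of c t f])
    show "c \<le> t"
      using False by simp
    fix x
    assume "c \<le> x"
    then have "a < x"
      using \<open>a < c\<close> by simp
    then show "\<exists>y. (f has_real_derivative y) (at x) \<and> y \<le> 0"
      using deriv decreasing \<open>c \<le> x\<close> by blast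
  qed
  then show ?thesis
    using False \<open>t \<le> b\<close> by (simp add: min_absorb2)
qed

lemma ln_diff_ln_add_mono:
  fixes x y c :: real
  assumes "0 < x" "x \<le> y" "0 \<le> c"
  shows "ln x - ln (x + c) \<le> ln y - ln (y + c)"
proof -
  have "x * (y + c) \<le> y * (x + c)"
    using assms by (simp add: algebra_simps mult_left_mono)
  then have "ln (x * (y + c)) \<le> ln (y * (x + c))"
    using assms by simp
  then show ?thesis
    using assms by (simp add: ln_mult)
qed

definition log_success :: "real \<Rightarrow> real \<Rightarrow> real \<Rightarrow> real \<Rightarrow> real \<Rightarrow> real" where
  "log_success e l1 l2 r1 r2 =
     ln (l2 * r1) - ln (l2 * r1 + e * l1 * r2) - e * l1 * (1 + e) / r1 - e * l2 / r2"

lemma outage_eq_1_minus_exp_log_success: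
  assumes "e > 0" "l1 > 0" "l2 > 0" "r1 > 0" "r2 > 0"
  shows "outage e l1 l2 r1 r2 = 1 - exp (log_success e l1 l2 r1 r2)"
proof -
  have pos: "l2 * r1 + e * l1 * r2 > 0"
    using assms by (simp add: add_pos_pos)
  have "exp (log_success e l1 l2 r1 r2)
        = exp (ln (l2 * r1)) / exp (ln (l2 * r1 + e * l1 * r2))
          * exp (- e * l1 * (1 + e) / r1 - e * l2 / r2)"
    unfolding log_success_def by (simp add: exp_diff exp_add[symmetric])
  also have "\<dots> = (l2 * r1) / (l2 * r1 + e * l1 * r2) * exp (- e * l1 * (1 + e) / r1 - e * l2 / r2)"
    using assms pos by simp
  also have "(l2 * r1) / (l2 * r1 + e * l1 * r2) = l2 / (l2 + e * r2 / r1 * l1)"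
    using assms pos by (simp add: field_simps)
  also have "- e * l1 * (1 + e) / r1 - e * l2 / r2
             = - l1 * (e / r1) - (l2 + e * r2 / r1 * l1) * (e / r2)"
    using assms by (simp add: field_simps)
  finally show ?thesis
    unfolding outage_def Let_def by simp
qed

lemma log_success_mono_rho1:
  assumes "e > 0" "l1 > 0" "l2 > 0" "r1 > 0" "r2 > 0" "r1 \<le> R"
  shows "log_success e l1 l2 r1 r2 \<le> log_success e l1 l2 R r2"
proof -
  have "ln (l2 * r1) - ln (l2 * r1 + e * l1 * r2) \<le> ln (l2 * R) - ln (l2 * R + e * l1 * r2)"
    using assms by (intro ln_diff_ln_add_mono) auto
  moreover have "e * l1 * (1 + e) / R \<le> e * l1 * (1 + e) / r1"
    using assms by (intro divide_left_mono) auto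
  ultimately show ?thesis
    unfolding log_success_def by linarith
qed

lemma log_success_has_derivative_rho2:
  assumes "e > 0" "l1 > 0" "l2 > 0" "R > 0" "t > 0"
  shows "(log_success e l1 l2 R has_real_derivative
          - e * l1 / (l2 * R + e * l1 * t) + e * l2 / t\<^sup>2) (at t)"
proof -
  have "l2 * R + e * l1 * t > 0"
    using assms by (simp add: add_pos_pos)
  then show ?thesis
    unfolding log_success_def using assms
    by (auto intro!: derivative_eq_intros) (simp add: divide_simps power2_eq_square)
qed

lemma log_success_derivative_rho2_sign:
  fixes e l1 l2 R t :: real
  assumes "e > 0" "l1 > 0" "l2 > 0" "R > 0" "t > 0"
  defines "D \<equiv> - e * l1 / (l2 * R + e * l1 * t) + e * l2 / t\<^sup>2"
    and "peak \<equiv> (e * l1 * l2 + l2 * sqrt (4 * R * l1 + e\<^sup>2 * l1\<^sup>2)) / (2 * l1)"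
  shows "0 \<le> D \<longleftrightarrow> t \<le> peak" and "D \<le> 0 \<longleftrightarrow> peak \<le> t"
proof -
  define q where "q = l1 * t\<^sup>2 + (- (e * l1 * l2)) * t + (- (l2\<^sup>2 * R))"
  have denom_pos: "l2 * R + e * l1 * t > 0"
    using assms(1-5) by (simp add: add_pos_pos)
  define w where "w = e / (t\<^sup>2 * (l2 * R + e * l1 * t))"
  have w_pos: "w > 0"
    unfolding w_def using assms(1-5) denom_pos by simp
  have D_eq: "D = - (w * q)"
    unfolding D_def q_def w_def using assms(1-5) denom_pos
    by (simp add: divide_simps power2_eq_square) (simp add: algebra_simps)
  have "sqrt ((- (e * l1 * l2))\<^sup>2 - 4 * l1 * (- (l2\<^sup>2 * R)))
        = sqrt (l2\<^sup>2 * (4 * R * l1 + e\<^sup>2 * l1\<^sup>2))"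
    by (simp add: algebra_simps power2_eq_square)
  also have "\<dots> = l2 * sqrt (4 * R * l1 + e\<^sup>2 * l1\<^sup>2)"
    using assms(1-5) by (simp add: real_sqrt_mult)
  finally have root: "(- (- (e * l1 * l2)) + sqrt ((- (e * l1 * l2))\<^sup>2 - 4 * l1 * (- (l2\<^sup>2 * R))))
                      / (2 * l1) = peak"
    unfolding peak_def by simp
  have "- (l2\<^sup>2 * R) < 0"
    using assms(1-5) by simp
  note q_sign = quadratic_sign_iff_le_root[OF \<open>l1 > 0\<close> this, of t "- (e * l1 * l2)",
      unfolded root, folded q_def]
  show "0 \<le> D \<longleftrightarrow> t \<le> peak" and "D \<le> 0 \<longleftrightarrow> peak \<le> t"
    unfolding D_eq using q_sign mult_le_cancel_left_pos[OF w_pos, of q 0]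
      mult_le_cancel_left_pos[OF w_pos, of 0 q] assms(5)
    by simp_all
qed

lemma log_success_rho2_le_at_clipped_peak:
  fixes e l1 l2 R Om t :: real
  assumes "e > 0" "l1 > 0" "l2 > 0" "R > 0" "0 < t" "t \<le> Om"
  defines "peak \<equiv> (e * l1 * l2 + l2 * sqrt (4 * R * l1 + e\<^sup>2 * l1\<^sup>2)) / (2 * l1)"
  shows "log_success e l1 l2 R t \<le> log_success e l1 l2 R (min Om peak)"
proof (rule DERIV_unimodal_le_at_clipped_peak)
  show "0 < peak"
    unfolding peak_def using assms(1-4) by (simp add: add_pos_nonneg)
  show "(log_success e l1 l2 R has_real_derivative
          - e * l1 / (l2 * R + e * l1 * x) + e * l2 / x\<^sup>2) (at x)" if "0 < x" for x
    using assms(1-4) that by (rule log_success_has_derivative_rho2)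
  show "0 \<le> - e * l1 / (l2 * R + e * l1 * x) + e * l2 / x\<^sup>2" if "0 < x" "x \<le> peak" for x
    using log_success_derivative_rho2_sign(1)[OF assms(1-4) \<open>0 < x\<close>] that
    unfolding peak_def by simp
  show "- e * l1 / (l2 * R + e * l1 * x) + e * l2 / x\<^sup>2 \<le> 0" if "peak \<le> x" for x
    using log_success_derivative_rho2_sign(2)[OF assms(1-4), of x] that \<open>0 < peak\<close>
    unfolding peak_def by simp
qed (use assms(5,6) in auto)

theorem corollary3:
  fixes eps0 Om1 Om2 d1 d2 \<alpha> lam1 lam2 :: real
  assumes "eps0 > 0" "Om1 > 0" "Om2 > 0"
    and "0 < d1" "d1 < d2" "\<alpha> > 0"
    and "lam1 = d1 powr \<alpha>" "lam2 = d2 powr \<alpha>"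
  shows "is_arg_min (\<lambda>(r1, r2). outage eps0 lam1 lam2 r1 r2)
           (\<lambda>p. p \<in> feasible Om1 Om2)
           (Om1, min Om2 ((eps0 * lam1 * lam2 + lam2 * sqrt (4 * Om1 * lam1 + eps0\<^sup>2 * lam1\<^sup>2))
                           / (2 * lam1)))"
proof -
  have lam: "lam1 > 0" "lam2 > 0"
    using assms by simp_all
  define rho2 where "rho2 = min Om2 ((eps0 * lam1 * lam2 + lam2 * sqrt (4 * Om1 * lam1 + eps0\<^sup>2 * lam1\<^sup>2))
                                     / (2 * lam1))"
  have "rho2 > 0"
    unfolding rho2_def using assms lam by (simp add: add_pos_nonneg)
  have "outage eps0 lam1 lam2 Om1 rho2 \<le> outage eps0 lam1 lam2 r1 r2"
    if "(r1, r2) \<in> feasible Om1 Om2" for r1 r2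
  proof -
    have r: "0 < r1" "r1 \<le> Om1" "0 < r2" "r2 \<le> Om2"
      using that unfolding feasible_def by simp_all
    have "log_success eps0 lam1 lam2 r1 r2 \<le> log_success eps0 lam1 lam2 Om1 r2"
      using assms(1) lam r by (intro log_success_mono_rho1)
    also have "\<dots> \<le> log_success eps0 lam1 lam2 Om1 rho2"
      unfolding rho2_def using assms(1,2) lam r by (intro log_success_rho2_le_at_clipped_peak)
    finally show ?thesis
      using assms(1,2) lam r \<open>rho2 > 0\<close> by (simp add: outage_eq_1_minus_exp_log_success)
  qed
  moreover have "(Om1, rho2) \<in> feasible Om1 Om2"
    unfolding feasible_def using assms(2) \<open>rho2 > 0\<close> by (simp add: rho2_def)
  ultimately show ?thesis
    unfolding is_arg_min_linorder rho2_def[symmetric] by auto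
qed

end
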